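(* Let $L=L_1\oplus L_2$ be a finite-dimensional Lie algebra which is the direct sum of ideals $L_1,L_2$. Then: (i) if there exist Lie algebras $H_1,H_2$ with $H_1^2\cong L_1$ and $H_2^2\cong L_2$, then there is a Lie algebra $H$ with $H^2\cong L$; (ii) if there is a Lie algebra $H$ with $H^2\cong L$ and $Z(L_1)=0$, then there is a Lie algebra $K$ with $K^2\cong L_1$.
   Context: $H^2=[H,H]$ denotes the derived algebra; $Z(L_1)$ is the centre of $L_1$. *)

theory Defs
  imports Complex_Main "HOL-Library.Function_Algebras"
begin

definition lie_algebra ::
  "('k::field \<Rightarrow> 'v::ab_group_add \<Rightarrow> 'v) \<Rightarrow> 'v set \<Rightarrow> ('v \<Rightarrow> 'v \<Rightarrow> 'v) \<Rightarrow> bool" where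
  "lie_algebra sc V br \<longleftrightarrow>
     vector_space sc \<and> module.subspace sc V \<and>
     (\<forall>x\<in>V. \<forall>y\<in>V. br x y \<in> V) \<and>
     (\<forall>x\<in>V. \<forall>y\<in>V. \<forall>z\<in>V. br (x + y) z = br x z + br y z \<and> br x (y + z) = br x y + br x z) \<and>
     (\<forall>c. \<forall>x\<in>V. \<forall>y\<in>V. br (sc c x) y = sc c (br x y) \<and> br x (sc c y) = sc c (br x y)) \<and>
     (\<forall>x\<in>V. br x x = 0) \<and>
     (\<forall>x\<in>V. \<forall>y\<in>V. \<forall>z\<in>V. br x (br y z) + br y (br z x) + br z (br x y) = 0)"

definition fd_lie_algebra ::
  "('k::field \<Rightarrow> 'v::ab_group_add \<Rightarrow> 'v) \<Rightarrow> 'v set \<Rightarrow> ('v \<Rightarrow> 'v \<Rightarrow> 'v) \<Rightarrow> bool" where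
  "fd_lie_algebra sc V br \<longleftrightarrow>
     lie_algebra sc V br \<and> (\<exists>B. finite B \<and> B \<subseteq> V \<and> module.span sc B = V)"

definition derived ::
  "('k::field \<Rightarrow> 'v::ab_group_add \<Rightarrow> 'v) \<Rightarrow> 'v set \<Rightarrow> ('v \<Rightarrow> 'v \<Rightarrow> 'v) \<Rightarrow> 'v set" where
  "derived sc V br = module.span sc {br x y | x y. x \<in> V \<and> y \<in> V}"

definition lie_iso ::
  "('k::field \<Rightarrow> 'a::ab_group_add \<Rightarrow> 'a) \<Rightarrow> 'a set \<Rightarrow> ('a \<Rightarrow> 'a \<Rightarrow> 'a) \<Rightarrow>
   ('k \<Rightarrow> 'b::ab_group_add \<Rightarrow> 'b) \<Rightarrow> 'b set \<Rightarrow> ('b \<Rightarrow> 'b \<Rightarrow> 'b) \<Rightarrow> bool" where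
  "lie_iso sc1 V1 br1 sc2 V2 br2 \<longleftrightarrow>
     (\<exists>f. bij_betw f V1 V2 \<and>
          (\<forall>x\<in>V1. \<forall>y\<in>V1. f (x + y) = f x + f y \<and> f (br1 x y) = br2 (f x) (f y)) \<and>
          (\<forall>c. \<forall>x\<in>V1. f (sc1 c x) = sc2 c (f x)))"

definition lie_ideal ::
  "('k::field \<Rightarrow> 'v::ab_group_add \<Rightarrow> 'v) \<Rightarrow> 'v set \<Rightarrow> ('v \<Rightarrow> 'v \<Rightarrow> 'v) \<Rightarrow> 'v set \<Rightarrow> bool" where
  "lie_ideal sc V br I \<longleftrightarrow>
     module.subspace sc I \<and> I \<subseteq> V \<and> (\<forall>x\<in>V. \<forall>y\<in>I. br x y \<in> I)"

definition lie_center :: "'v::ab_group_add set \<Rightarrow> ('v \<Rightarrow> 'v \<Rightarrow> 'v) \<Rightarrow> 'v set" where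
  "lie_center V br = {z \<in> V. \<forall>x\<in>V. br z x = 0}"

text \<open>Universe for the Lie algebras asserted to exist: subspaces of k^(nat)
 (functions nat => 'k with pointwise operations). Every finite-dimensional
 Lie algebra over 'k is isomorphic to one of these.\<close>
definition seq_scale :: "'k::field \<Rightarrow> (nat \<Rightarrow> 'k) \<Rightarrow> (nat \<Rightarrow> 'k)" where
  "seq_scale c f = (\<lambda>i. c * f i)"

end

theory Submission
  imports Defs "HOL-Library.Product_Plus"
begin

text \<open>
  (i) The direct product \<open>H\<^sub>1 \<times> H\<^sub>2\<close> has derived algebra
  \<open>H\<^sub>1\<^sup>2 \<times> H\<^sub>2\<^sup>2 \<cong> L\<^sub>1 \<times> L\<^sub>2 \<cong> L\<close>.

  (ii) Transporting \<open>ad h\<close> along \<open>H\<^sup>2 \<cong> L\<close> lets \<open>H\<close> act on \<open>L\<close> by derivations.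
  A derivation \<open>D\<close> of \<open>L\<close> maps \<open>L\<^sub>2\<close> into itself: for \<open>x \<in> L\<^sub>1\<close> and
  \<open>z \<in> L\<^sub>2\<close> the element \<open>[x, D z] = - [D x, z]\<close> lies in \<open>L\<^sub>1 \<inter> L\<^sub>2 = 0\<close>, so the
  \<open>L\<^sub>1\<close>-component of \<open>D z\<close> is central in \<open>L\<^sub>1\<close>, hence zero. So \<open>D\<close> induces a
  derivation of \<open>L\<^sub>1 \<cong> L/L\<^sub>2\<close>, and \<open>H\<close> maps homomorphically onto a Lie algebra
  \<open>K\<close> of linear maps on \<open>L\<^sub>1\<close>. The image of \<open>H\<^sup>2\<close> is \<open>ad L\<^sub>1\<close>, so
  \<open>K\<^sup>2 = ad L\<^sub>1 \<cong> L\<^sub>1\<close> because \<open>Z(L\<^sub>1) = 0\<close>.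

  Finally, coordinates with respect to a basis realise every finite-dimensional Lie algebra
  on a subspace of \<open>nat \<Rightarrow> 'k\<close>, where the statement asks for \<open>H\<close> and \<open>K\<close>.
\<close>

definition linear_on ::
  "('k \<Rightarrow> 'a::ab_group_add \<Rightarrow> 'a) \<Rightarrow> ('k \<Rightarrow> 'b::ab_group_add \<Rightarrow> 'b) \<Rightarrow>
   'a set \<Rightarrow> ('a \<Rightarrow> 'b) \<Rightarrow> bool" where
  "linear_on s1 s2 V f \<longleftrightarrow>
     (\<forall>x\<in>V. \<forall>y\<in>V. f (x + y) = f x + f y) \<and> (\<forall>c. \<forall>x\<in>V. f (s1 c x) = s2 c (f x))"

definition lie_hom_on ::
  "('k \<Rightarrow> 'a::ab_group_add \<Rightarrow> 'a) \<Rightarrow> 'a set \<Rightarrow> ('a \<Rightarrow> 'a \<Rightarrow> 'a) \<Rightarrow>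
   ('k \<Rightarrow> 'b::ab_group_add \<Rightarrow> 'b) \<Rightarrow> ('b \<Rightarrow> 'b \<Rightarrow> 'b) \<Rightarrow> ('a \<Rightarrow> 'b) \<Rightarrow> bool" where
  "lie_hom_on s1 V b1 s2 b2 f \<longleftrightarrow>
     linear_on s1 s2 V f \<and> (\<forall>x\<in>V. \<forall>y\<in>V. f (b1 x y) = b2 (f x) (f y))"

lemma lie_iso_iff_hom:
  "lie_iso s1 V1 b1 s2 V2 b2 \<longleftrightarrow> (\<exists>f. bij_betw f V1 V2 \<and> lie_hom_on s1 V1 b1 s2 b2 f)"
  by (auto simp: lie_iso_def lie_hom_on_def linear_on_def)

lemma linear_on_subset: "linear_on s1 s2 V f \<Longrightarrow> W \<subseteq> V \<Longrightarrow> linear_on s1 s2 W f"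
  unfolding linear_on_def by blast

lemma linear_on_zero: "linear_on s1 s2 V f \<Longrightarrow> 0 \<in> V \<Longrightarrow> f 0 = 0"
  unfolding linear_on_def by (metis add_0 add_cancel_right_right)

lemma linear_on_diff:
  assumes "linear_on s1 s2 V f" "x \<in> V" "y \<in> V" "x - y \<in> V"
  shows "f (x - y) = f x - f y"
proof -
  have "f x = f (x - y) + f y"
    using assms unfolding linear_on_def by (metis diff_add_cancel)
  then show ?thesis
    by simp
qed

lemma lie_hom_on_subset: "lie_hom_on s1 V b1 s2 b2 f \<Longrightarrow> W \<subseteq> V \<Longrightarrow> lie_hom_on s1 W b1 s2 b2 f"
  unfolding lie_hom_on_def using linear_on_subset by blast

context vector_space_pair
begin

lemma subspace_image_linear_on:
  assumes f: "linear_on s1 s2 W f" and W: "vs1.subspace W"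
  shows "vs2.subspace (f ` W)"
  unfolding vs2.subspace_def
proof (intro conjI ballI allI)
  show "0 \<in> f ` W"
    using linear_on_zero[OF f] vs1.subspace_0[OF W] by (metis image_eqI)
next
  fix u v assume "u \<in> f ` W" "v \<in> f ` W"
  then obtain x y where "x \<in> W" "y \<in> W" "u = f x" "v = f y" by blast
  with f show "u + v \<in> f ` W"
    using vs1.subspace_add[OF W] unfolding linear_on_def by (metis image_eqI)
next
  fix c u assume "u \<in> f ` W"
  then obtain x where "x \<in> W" "u = f x" by blast
  with f show "s2 c u \<in> f ` W"
    using vs1.subspace_scale[OF W] unfolding linear_on_def by (metis image_eqI)
qed

lemma subspace_vimage_linear_on:
  assumes f: "linear_on s1 s2 V f" and V: "vs1.subspace V" and U: "vs2.subspace U"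
  shows "vs1.subspace {x \<in> V. f x \<in> U}"
  using f linear_on_zero[OF f] V U
  unfolding linear_on_def vs1.subspace_def vs2.subspace_def by auto

lemma span_image_linear_on:
  assumes f: "linear_on s1 s2 V f" and V: "vs1.subspace V" and S: "S \<subseteq> V"
  shows "vs2.span (f ` S) = f ` vs1.span S"
proof (rule vs2.span_subspace)
  have span_S: "vs1.span S \<subseteq> V"
    using vs1.span_minimal[OF S V] .
  show "f ` S \<subseteq> f ` vs1.span S"
    by (rule image_mono) (rule vs1.span_superset)
  show "vs2.subspace (f ` vs1.span S)"
    using linear_on_subset[OF f span_S] vs1.subspace_span by (rule subspace_image_linear_on)
  have "vs1.span S \<subseteq> {x \<in> V. f x \<in> vs2.span (f ` S)}"
    using S vs2.span_base subspace_vimage_linear_on[OF f V vs2.subspace_span]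
    by (intro vs1.span_minimal) auto
  then show "f ` vs1.span S \<subseteq> vs2.span (f ` S)"
    by auto
qed

end

locale lie_alg =
  fixes sc :: "'k::field \<Rightarrow> 'v::ab_group_add \<Rightarrow> 'v" and V :: "'v set" and br :: "'v \<Rightarrow> 'v \<Rightarrow> 'v"
  assumes lie_algebra: "lie_algebra sc V br"
begin

sublocale vector_space sc
  using lie_algebra by (simp add: lie_algebra_def)

lemma subspace_carrier: "subspace V"
  using lie_algebra by (simp add: lie_algebra_def)

lemma zero_mem: "0 \<in> V"
  and add_mem: "x \<in> V \<Longrightarrow> y \<in> V \<Longrightarrow> x + y \<in> V"
  and scale_mem: "x \<in> V \<Longrightarrow> sc c x \<in> V"
  and diff_mem: "x \<in> V \<Longrightarrow> y \<in> V \<Longrightarrow> x - y \<in> V"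
  and neg_mem: "x \<in> V \<Longrightarrow> - x \<in> V"
  using subspace_carrier subspace_diff subspace_neg by (auto simp: subspace_def)

lemma bracket_mem: "x \<in> V \<Longrightarrow> y \<in> V \<Longrightarrow> br x y \<in> V"
  and bracket_add_left: "x \<in> V \<Longrightarrow> y \<in> V \<Longrightarrow> z \<in> V \<Longrightarrow> br (x + y) z = br x z + br y z"
  and bracket_add_right: "x \<in> V \<Longrightarrow> y \<in> V \<Longrightarrow> z \<in> V \<Longrightarrow> br x (y + z) = br x y + br x z"
  and bracket_scale_left: "x \<in> V \<Longrightarrow> y \<in> V \<Longrightarrow> br (sc c x) y = sc c (br x y)"
  and bracket_scale_right: "x \<in> V \<Longrightarrow> y \<in> V \<Longrightarrow> br x (sc c y) = sc c (br x y)"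
  and bracket_self: "x \<in> V \<Longrightarrow> br x x = 0"
  and jacobi: "x \<in> V \<Longrightarrow> y \<in> V \<Longrightarrow> z \<in> V \<Longrightarrow> br x (br y z) + br y (br z x) + br z (br x y) = 0"
  using lie_algebra unfolding lie_algebra_def by blast+

lemma bracket_diff_left: "x \<in> V \<Longrightarrow> y \<in> V \<Longrightarrow> z \<in> V \<Longrightarrow> br (x - y) z = br x z - br y z"
  using bracket_add_left[of "x - y" y z] diff_mem by (simp add: eq_diff_eq)

lemma bracket_diff_right: "x \<in> V \<Longrightarrow> y \<in> V \<Longrightarrow> z \<in> V \<Longrightarrow> br x (y - z) = br x y - br x z"
  using bracket_add_right[of x "y - z" z] diff_mem by (simp add: eq_diff_eq)

lemma bracket_zero_right: "x \<in> V \<Longrightarrow> br x 0 = 0"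
  using bracket_diff_right[of x 0 0] zero_mem by simp

lemma bracket_neg_right: "x \<in> V \<Longrightarrow> y \<in> V \<Longrightarrow> br x (- y) = - br x y"
  using bracket_diff_right[of x 0 y] zero_mem bracket_zero_right by simp

lemma bracket_antisym: "x \<in> V \<Longrightarrow> y \<in> V \<Longrightarrow> br x y = - br y x"
  using bracket_self[of "x + y"] bracket_add_left[of x y "x + y"] bracket_add_right add_mem
  by (simp add: bracket_self eq_neg_iff_add_eq_0 add.commute add.left_commute)

lemma bracket_leibniz:
  "x \<in> V \<Longrightarrow> y \<in> V \<Longrightarrow> z \<in> V \<Longrightarrow> br x (br y z) = br (br x y) z + br y (br x z)"
  using jacobi[of x y z] bracket_antisym[of z x] bracket_antisym[of z "br x y"]
    bracket_neg_right[of y "br x z"] bracket_mem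
  by (simp add: algebra_simps)

lemma lie_subalgebra:
  assumes "subspace W" "W \<subseteq> V" "\<And>x y. x \<in> W \<Longrightarrow> y \<in> W \<Longrightarrow> br x y \<in> W"
  shows "lie_algebra sc W br"
  using lie_algebra assms unfolding lie_algebra_def by (simp add: subset_iff)

lemma lie_algebra_ideal: "lie_ideal sc V br I \<Longrightarrow> lie_algebra sc I br"
  by (rule lie_subalgebra) (auto simp: lie_ideal_def)

lemma bracket_in_derived: "x \<in> V \<Longrightarrow> y \<in> V \<Longrightarrow> br x y \<in> derived sc V br"
  unfolding derived_def by (rule span_base) blast

lemma derived_subset: "derived sc V br \<subseteq> V"
  unfolding derived_def by (rule span_minimal) (auto simp: bracket_mem subspace_carrier)

lemma lie_algebra_derived: "lie_algebra sc (derived sc V br) br"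
  by (rule lie_subalgebra)
    (use derived_subset bracket_in_derived in \<open>auto simp: derived_def subspace_span\<close>)

end

lemma fd_lie_algebra_lie_alg: "fd_lie_algebra sc V br \<Longrightarrow> lie_alg sc V br"
  by (simp add: lie_alg_def fd_lie_algebra_def)

lemma lie_algebra_image:
  assumes V: "lie_algebra s1 V b1" and "vector_space s2" and f: "lie_hom_on s1 V b1 s2 b2 f"
  shows "lie_algebra s2 (f ` V) b2"
proof -
  interpret V: lie_alg s1 V b1 by (rule lie_alg.intro) fact
  interpret vector_space_pair s1 s2
    by (simp add: vector_space_pair_def V.vector_space_axioms \<open>vector_space s2\<close>)
  have hom: "f x + f y = f (x + y)" "s2 c (f x) = f (s1 c x)" "b2 (f x) (f y) = f (b1 x y)"
    if "x \<in> V" "y \<in> V" for x y c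
    using f that unfolding lie_hom_on_def linear_on_def by auto
  have "f 0 = 0"
    using f V.zero_mem linear_on_zero unfolding lie_hom_on_def by blast
  moreover have "vs2.subspace (f ` V)"
    using f V.subspace_carrier subspace_image_linear_on unfolding lie_hom_on_def by blast
  ultimately show ?thesis
    unfolding lie_algebra_def
    by (auto simp: hom V.add_mem V.scale_mem V.bracket_mem V.bracket_add_left V.bracket_add_right
        V.bracket_scale_left V.bracket_scale_right V.bracket_self V.jacobi \<open>vector_space s2\<close>)
qed

lemma fd_lie_algebra_image:
  assumes V: "fd_lie_algebra s1 V b1" and "vector_space s2" and f: "lie_hom_on s1 V b1 s2 b2 f"
  shows "fd_lie_algebra s2 (f ` V) b2"
proof -
  interpret V: lie_alg s1 V b1
    using V by (rule fd_lie_algebra_lie_alg)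
  interpret vector_space_pair s1 s2
    by (simp add: vector_space_pair_def V.vector_space_axioms \<open>vector_space s2\<close>)
  obtain B where "finite B" "B \<subseteq> V" "V.span B = V"
    using V by (auto simp: fd_lie_algebra_def)
  moreover have "vs2.span (f ` B) = f ` V.span B"
    using f V.subspace_carrier \<open>B \<subseteq> V\<close> span_image_linear_on unfolding lie_hom_on_def by blast
  ultimately show ?thesis
    using lie_algebra_image[OF V.lie_algebra \<open>vector_space s2\<close> f]
    unfolding fd_lie_algebra_def by (metis finite_imageI image_mono)
qed

lemma derived_image:
  assumes V: "lie_algebra s1 V b1" and "vector_space s2" and f: "lie_hom_on s1 V b1 s2 b2 f"
  shows "derived s2 (f ` V) b2 = f ` derived s1 V b1"
proof -
  interpret V: lie_alg s1 V b1 by (rule lie_alg.intro) fact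
  interpret vector_space_pair s1 s2
    by (simp add: vector_space_pair_def V.vector_space_axioms \<open>vector_space s2\<close>)
  have brackets: "{b2 u v | u v. u \<in> f ` V \<and> v \<in> f ` V} = f ` {b1 x y | x y. x \<in> V \<and> y \<in> V}"
    using f unfolding lie_hom_on_def by (auto 0 4 simp: image_iff)
  have "{b1 x y | x y. x \<in> V \<and> y \<in> V} \<subseteq> V"
    using V.bracket_mem by blast
  with f show ?thesis
    unfolding derived_def brackets lie_hom_on_def
    using span_image_linear_on V.subspace_carrier by blast
qed

lemma lie_hom_on_inv_into:
  assumes V1: "lie_algebra s1 V1 b1" and f: "bij_betw f V1 V2" and hom: "lie_hom_on s1 V1 b1 s2 b2 f"
  shows "lie_hom_on s2 V2 b2 s1 b1 (inv_into V1 f)"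
proof -
  interpret V1: lie_alg s1 V1 b1 by (rule lie_alg.intro) fact
  have V2: "V2 = f ` V1"
    using f by (simp add: bij_betw_def)
  have hom': "f x + f y = f (x + y)" "s2 c (f x) = f (s1 c x)" "b2 (f x) (f y) = f (b1 x y)"
    if "x \<in> V1" "y \<in> V1" for x y c
    using hom that unfolding lie_hom_on_def linear_on_def by auto
  have inv: "inv_into V1 f (f x) = x" if "x \<in> V1" for x
    using f that by (simp add: bij_betw_inv_into_left)
  show ?thesis
    unfolding V2 lie_hom_on_def linear_on_def
    by (auto simp: hom' inv V1.add_mem V1.scale_mem V1.bracket_mem)
qed

lemma lie_iso_sym:
  assumes "lie_algebra s1 V1 b1" and "lie_iso s1 V1 b1 s2 V2 b2"
  shows "lie_iso s2 V2 b2 s1 V1 b1"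
  using assms bij_betw_inv_into lie_hom_on_inv_into lie_iso_iff_hom by metis

lemma lie_iso_trans:
  assumes "lie_iso s1 V1 b1 s2 V2 b2" and "lie_iso s2 V2 b2 s3 V3 b3"
  shows "lie_iso s1 V1 b1 s3 V3 b3"
proof -
  obtain f where f: "bij_betw f V1 V2" "lie_hom_on s1 V1 b1 s2 b2 f"
    using assms(1) lie_iso_iff_hom by blast
  obtain g where g: "bij_betw g V2 V3" "lie_hom_on s2 V2 b2 s3 b3 g"
    using assms(2) lie_iso_iff_hom by blast
  have "lie_hom_on s1 V1 b1 s3 b3 (g \<circ> f)"
    using f g bij_betwE[OF f(1)] unfolding lie_hom_on_def linear_on_def by auto
  then show ?thesis
    using bij_betw_trans[OF f(1) g(1)] lie_iso_iff_hom by blast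
qed

lemma lie_iso_derived:
  assumes V1: "lie_algebra s1 V1 b1" and "vector_space s2" and iso: "lie_iso s1 V1 b1 s2 V2 b2"
  shows "lie_iso s1 (derived s1 V1 b1) b1 s2 (derived s2 V2 b2) b2"
proof -
  interpret V1: lie_alg s1 V1 b1 by (rule lie_alg.intro) fact
  obtain f where f: "bij_betw f V1 V2" and hom: "lie_hom_on s1 V1 b1 s2 b2 f"
    using iso lie_iso_iff_hom by blast
  have "derived s2 V2 b2 = f ` derived s1 V1 b1"
    using derived_image[OF V1 \<open>vector_space s2\<close> hom] f by (simp add: bij_betw_def)
  moreover have "inj_on f (derived s1 V1 b1)"
    using f V1.derived_subset by (auto simp: bij_betw_def intro: inj_on_subset)
  ultimately show ?thesis
    using lie_hom_on_subset[OF hom V1.derived_subset] lie_iso_iff_hom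
    by (metis inj_on_imp_bij_betw)
qed

definition lie_derivation ::
  "('k::field \<Rightarrow> 'v::ab_group_add \<Rightarrow> 'v) \<Rightarrow> 'v set \<Rightarrow> ('v \<Rightarrow> 'v \<Rightarrow> 'v) \<Rightarrow> ('v \<Rightarrow> 'v) \<Rightarrow> bool"
where
  "lie_derivation sc L br D \<longleftrightarrow>
     linear_on sc sc L D \<and> (\<forall>x\<in>L. D x \<in> L) \<and> (\<forall>x\<in>L. \<forall>y\<in>L. D (br x y) = br (D x) y + br x (D y))"

section \<open>Realisation inside \<open>nat \<Rightarrow> 'k\<close>\<close>

lemma vector_space_seq_scale: "vector_space (seq_scale :: 'k::field \<Rightarrow> _)"
  by unfold_locales (auto simp: seq_scale_def fun_eq_iff algebra_simps)

lemma (in vector_space) finite_span_coordinates: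
  assumes "finite S"
  shows "\<exists>g. inj_on g (span S) \<and> linear_on scale seq_scale (span S) g"
proof -
  obtain B where "B \<subseteq> S" and B: "independent B" and "S \<subseteq> span B"
    using maximal_independent_subset by blast
  then have span_B: "span B = span S"
    by (simp add: span_eq span_superset span_mono subset_trans)
  obtain e where e: "bij_betw e {0..<card B} B"
    using ex_bij_betw_nat_finite finite_subset[OF \<open>B \<subseteq> S\<close> assms] by blast
  define g where "g x = (\<lambda>i. if i < card B then representation B x (e i) else 0)" for x
  have "linear_on scale seq_scale (span B) g"
    unfolding linear_on_def g_def seq_scale_def
    by (auto simp: fun_eq_iff representation_add[OF B] representation_scale[OF B] span_scale)
  moreover have "inj_on g (span B)"
  proof (rule inj_onI)
    fix x y assume x: "x \<in> span B" and y: "y \<in> span B" and "g x = g y"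
    have "representation B x = representation B y"
    proof (rule ext)
      fix b show "representation B x b = representation B y b"
      proof (cases "b \<in> B")
        case True
        then obtain i where "i < card B" "b = e i"
          using e by (force simp: bij_betw_def)
        with fun_cong[OF \<open>g x = g y\<close>, of i] show ?thesis
          by (simp add: g_def)
      next
        case False
        then show ?thesis
          by (metis representation_ne_zero)
      qed
    qed
    then show "x = y"
      using sum_nonzero_representation_eq[OF B x] sum_nonzero_representation_eq[OF B y] by metis
  qed
  ultimately show ?thesis
    using span_B by auto
qed

lemma fd_lie_algebra_iso_seq:
  fixes sc :: "'k::field \<Rightarrow> 'v::ab_group_add \<Rightarrow> 'v"
  assumes V: "fd_lie_algebra sc V br"
  shows "\<exists>(H :: (nat \<Rightarrow> 'k) set) brH. fd_lie_algebra seq_scale H brH \<and> lie_iso sc V br seq_scale H brH"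
proof -
  interpret V: lie_alg sc V br
    using V by (rule fd_lie_algebra_lie_alg)
  obtain S where "finite S" "V.span S = V"
    using V unfolding fd_lie_algebra_def by blast
  then obtain g where inj: "inj_on g V" and lin: "linear_on sc seq_scale V g"
    using V.finite_span_coordinates by metis
  define brH where "brH u w = g (br (inv_into V g u) (inv_into V g w))" for u w
  have "lie_hom_on sc V br seq_scale brH g"
    unfolding lie_hom_on_def brH_def using lin inj by simp
  then have "fd_lie_algebra seq_scale (g ` V) brH \<and> lie_iso sc V br seq_scale (g ` V) brH"
    using fd_lie_algebra_image[OF V vector_space_seq_scale] inj_on_imp_bij_betw[OF inj]
      lie_iso_iff_hom by blast
  then show ?thesis
    by blast
qed

lemma ex_seq_lie_algebra_derived_iso:
  fixes s :: "'k::field \<Rightarrow> 'a::ab_group_add \<Rightarrow> 'a"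
  assumes H: "fd_lie_algebra s H b" and iso: "lie_iso s (derived s H b) b sc M br"
  shows "\<exists>(H' :: (nat \<Rightarrow> 'k) set) b'.
           fd_lie_algebra seq_scale H' b' \<and> lie_iso seq_scale (derived seq_scale H' b') b' sc M br"
proof -
  obtain H' :: "(nat \<Rightarrow> 'k) set" and b' where H': "fd_lie_algebra seq_scale H' b'"
    and HH': "lie_iso s H b seq_scale H' b'"
    using fd_lie_algebra_iso_seq[OF H] by blast
  have "lie_algebra s H b" and H'_lie: "lie_algebra seq_scale H' b'"
    using H H' by (simp_all add: fd_lie_algebra_def)
  then have "vector_space s" and "lie_iso seq_scale H' b' s H b"
    using lie_iso_sym[OF _ HH'] by (simp_all add: lie_algebra_def)
  then have "lie_iso seq_scale (derived seq_scale H' b') b' s (derived s H b) b"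
    using lie_iso_derived[OF H'_lie] by blast
  then show ?thesis
    using H' lie_iso_trans[OF _ iso] by blast
qed

section \<open>Direct products\<close>

definition prod_scale ::
  "('k \<Rightarrow> 'a \<Rightarrow> 'a) \<Rightarrow> ('k \<Rightarrow> 'b \<Rightarrow> 'b) \<Rightarrow> 'k \<Rightarrow> 'a \<times> 'b \<Rightarrow> 'a \<times> 'b" where
  "prod_scale s1 s2 c = map_prod (s1 c) (s2 c)"

definition prod_bracket ::
  "('a \<Rightarrow> 'a \<Rightarrow> 'a) \<Rightarrow> ('b \<Rightarrow> 'b \<Rightarrow> 'b) \<Rightarrow> 'a \<times> 'b \<Rightarrow> 'a \<times> 'b \<Rightarrow> 'a \<times> 'b" where
  "prod_bracket b1 b2 p q = (b1 (fst p) (fst q), b2 (snd p) (snd q))"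

lemma prod_scale_Pair [simp]: "prod_scale s1 s2 c (x, y) = (s1 c x, s2 c y)"
  by (simp add: prod_scale_def)

lemma prod_bracket_Pair [simp]: "prod_bracket b1 b2 (x, y) (x', y') = (b1 x x', b2 y y')"
  by (simp add: prod_bracket_def)

context vector_space_pair
begin

lemma vector_space_prod_scale: "vector_space (prod_scale s1 s2)"
  by unfold_locales
    (auto simp: prod_scale_def vs1.scale_right_distrib vs1.scale_left_distrib
      vs2.scale_right_distrib vs2.scale_left_distrib)

lemma subspace_Times:
  "vs1.subspace A \<Longrightarrow> vs2.subspace B \<Longrightarrow> module.subspace (prod_scale s1 s2) (A \<times> B)"
  using vector_space_prod_scale
  by (auto simp: module.subspace_def vs1.subspace_def vs2.subspace_def module_iff_vector_space
      zero_prod_def)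

lemma span_Times:
  assumes "0 \<in> A" "0 \<in> B"
  shows "module.span (prod_scale s1 s2) (A \<times> B) = vs1.span A \<times> vs2.span B"
proof -
  interpret P: vector_space "prod_scale s1 s2"
    by (rule vector_space_prod_scale)
  interpret P1: vector_space_pair s1 "prod_scale s1 s2" ..
  interpret P2: vector_space_pair s2 "prod_scale s1 s2" ..
  have "P.span (A \<times> B) \<subseteq> vs1.span A \<times> vs2.span B"
    by (intro P.span_minimal subspace_Times vs1.subspace_span vs2.subspace_span)
      (auto intro: vs1.span_base vs2.span_base)
  moreover have "vs1.span A \<times> vs2.span B \<subseteq> P.span (A \<times> B)"
  proof clarify
    fix x y assume "x \<in> vs1.span A" "y \<in> vs2.span B"
    have "P.span ((\<lambda>x. (x, 0)) ` A) = (\<lambda>x. (x, 0)) ` vs1.span A"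
      by (rule P1.span_image_linear_on[of UNIV]) (auto simp: linear_on_def)
    moreover have "P.span ((\<lambda>y. (0, y)) ` B) = (\<lambda>y. (0, y)) ` vs2.span B"
      by (rule P2.span_image_linear_on[of UNIV]) (auto simp: linear_on_def)
    moreover have "P.span ((\<lambda>x. (x, 0)) ` A) \<subseteq> P.span (A \<times> B)"
      "P.span ((\<lambda>y. (0, y)) ` B) \<subseteq> P.span (A \<times> B)"
      using assms by (auto intro!: P.span_mono)
    ultimately have "(x, 0) \<in> P.span (A \<times> B)" "(0, y) \<in> P.span (A \<times> B)"
      using \<open>x \<in> vs1.span A\<close> \<open>y \<in> vs2.span B\<close> by blast+
    from P.span_add[OF this] show "(x, y) \<in> P.span (A \<times> B)"
      by simp
  qed
  ultimately show ?thesis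
    by blast
qed

end

lemma lie_algebra_prod:
  assumes "lie_algebra s1 H1 b1" and "lie_algebra s2 H2 b2"
  shows "lie_algebra (prod_scale s1 s2) (H1 \<times> H2) (prod_bracket b1 b2)"
proof -
  interpret H1: lie_alg s1 H1 b1 by (rule lie_alg.intro) fact
  interpret H2: lie_alg s2 H2 b2 by (rule lie_alg.intro) fact
  interpret vector_space_pair s1 s2 ..
  show ?thesis
    unfolding lie_algebra_def
    using vector_space_prod_scale subspace_Times[OF H1.subspace_carrier H2.subspace_carrier]
    by (auto simp: H1.bracket_mem H1.bracket_add_left H1.bracket_add_right H1.bracket_scale_left
        H1.bracket_scale_right H1.bracket_self H1.jacobi H2.bracket_mem H2.bracket_add_left
        H2.bracket_add_right H2.bracket_scale_left H2.bracket_scale_right H2.bracket_self H2.jacobi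
        zero_prod_def)
qed

lemma fd_lie_algebra_prod:
  assumes H1: "fd_lie_algebra s1 H1 b1" and H2: "fd_lie_algebra s2 H2 b2"
  shows "fd_lie_algebra (prod_scale s1 s2) (H1 \<times> H2) (prod_bracket b1 b2)"
proof -
  interpret H1: lie_alg s1 H1 b1
    using H1 by (rule fd_lie_algebra_lie_alg)
  interpret H2: lie_alg s2 H2 b2
    using H2 by (rule fd_lie_algebra_lie_alg)
  interpret vector_space_pair s1 s2 ..
  obtain B1 where B1: "finite B1" "B1 \<subseteq> H1" "H1.span B1 = H1"
    using H1 unfolding fd_lie_algebra_def by blast
  obtain B2 where B2: "finite B2" "B2 \<subseteq> H2" "H2.span B2 = H2"
    using H2 unfolding fd_lie_algebra_def by blast
  have "module.span (prod_scale s1 s2) (insert 0 B1 \<times> insert 0 B2) = H1 \<times> H2"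
    using span_Times[of "insert 0 B1" "insert 0 B2"] B1 B2 by (simp add: H1.span_insert_0 H2.span_insert_0)
  moreover have "insert 0 B1 \<times> insert 0 B2 \<subseteq> H1 \<times> H2"
    using B1 B2 H1.zero_mem H2.zero_mem by blast
  moreover have "finite (insert 0 B1 \<times> insert 0 B2)"
    using B1 B2 by simp
  ultimately show ?thesis
    using lie_algebra_prod[OF H1.lie_algebra H2.lie_algebra]
    unfolding fd_lie_algebra_def by blast
qed

lemma derived_prod:
  assumes "lie_algebra s1 H1 b1" and "lie_algebra s2 H2 b2"
  shows "derived (prod_scale s1 s2) (H1 \<times> H2) (prod_bracket b1 b2) = derived s1 H1 b1 \<times> derived s2 H2 b2"
proof -
  interpret H1: lie_alg s1 H1 b1 by (rule lie_alg.intro) fact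
  interpret H2: lie_alg s2 H2 b2 by (rule lie_alg.intro) fact
  interpret vector_space_pair s1 s2 ..
  let ?S1 = "{b1 x y | x y. x \<in> H1 \<and> y \<in> H1}" and ?S2 = "{b2 x y | x y. x \<in> H2 \<and> y \<in> H2}"
  have "{prod_bracket b1 b2 p q | p q. p \<in> H1 \<times> H2 \<and> q \<in> H1 \<times> H2} = ?S1 \<times> ?S2"
    by (force simp: prod_bracket_def)
  moreover have "0 \<in> ?S1" "0 \<in> ?S2"
    using H1.bracket_self[OF H1.zero_mem] H2.bracket_self[OF H2.zero_mem] H1.zero_mem H2.zero_mem
    by (metis (mono_tags, lifting) mem_Collect_eq)+
  ultimately show ?thesis
    unfolding derived_def by (simp add: span_Times)
qed

lemma lie_iso_prod:
  assumes "lie_iso s1 V1 b1 t1 W1 c1" and "lie_iso s2 V2 b2 t2 W2 c2"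
  shows "lie_iso (prod_scale s1 s2) (V1 \<times> V2) (prod_bracket b1 b2)
           (prod_scale t1 t2) (W1 \<times> W2) (prod_bracket c1 c2)"
proof -
  obtain f where f: "bij_betw f V1 W1" "lie_hom_on s1 V1 b1 t1 c1 f"
    using assms(1) lie_iso_iff_hom by blast
  obtain g where g: "bij_betw g V2 W2" "lie_hom_on s2 V2 b2 t2 c2 g"
    using assms(2) lie_iso_iff_hom by blast
  have "lie_hom_on (prod_scale s1 s2) (V1 \<times> V2) (prod_bracket b1 b2)
          (prod_scale t1 t2) (prod_bracket c1 c2) (map_prod f g)"
    using f(2) g(2) by (auto simp: lie_hom_on_def linear_on_def)
  then show ?thesis
    using bij_betw_map_prod[OF f(1) g(1)] lie_iso_iff_hom by blast
qed

section \<open>The adjoint representation\<close>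

definition fun_scale :: "('k \<Rightarrow> 'v \<Rightarrow> 'v) \<Rightarrow> 'k \<Rightarrow> ('x \<Rightarrow> 'v) \<Rightarrow> 'x \<Rightarrow> 'v" where
  "fun_scale sc c \<phi> = (\<lambda>x. sc c (\<phi> x))"

text \<open>Maps are taken to be \<open>0\<close> outside the carrier \<open>A\<close>, so that they are determined
  by their restriction to \<open>A\<close>.\<close>

definition commutator_on :: "'v set \<Rightarrow> ('v \<Rightarrow> 'v::ab_group_add) \<Rightarrow> ('v \<Rightarrow> 'v) \<Rightarrow> 'v \<Rightarrow> 'v" where
  "commutator_on A \<phi> \<chi> = (\<lambda>x. if x \<in> A then \<phi> (\<chi> x) - \<chi> (\<phi> x) else 0)"

definition ad_on :: "'v set \<Rightarrow> ('v \<Rightarrow> 'v \<Rightarrow> 'v::ab_group_add) \<Rightarrow> 'v \<Rightarrow> 'v \<Rightarrow> 'v" where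
  "ad_on A br a = (\<lambda>x. if x \<in> A then br a x else 0)"

lemma vector_space_fun_scale: "vector_space sc \<Longrightarrow> vector_space (fun_scale sc)"
  unfolding vector_space_def fun_scale_def by (simp add: fun_eq_iff plus_fun_def)

context lie_alg
begin

lemma lie_hom_ad_on: "lie_hom_on sc V br (fun_scale sc) (commutator_on V) (ad_on V br)"
proof -
  have "br (br a b) x = br a (br b x) - br b (br a x)" if "a \<in> V" "b \<in> V" "x \<in> V" for a b x
    using bracket_leibniz[OF that] by (simp add: algebra_simps)
  then show ?thesis
    unfolding lie_hom_on_def linear_on_def
    by (auto simp: fun_eq_iff fun_scale_def commutator_on_def ad_on_def bracket_add_left
        bracket_scale_left bracket_mem)
qed

lemma inj_on_ad_on:
  assumes "lie_center V br = {0}"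
  shows "inj_on (ad_on V br) V"
proof (rule inj_onI)
  fix a b assume "a \<in> V" "b \<in> V" and ad_eq: "ad_on V br a = ad_on V br b"
  have "br a x = br b x" if "x \<in> V" for x
    using fun_cong[OF ad_eq, of x] that by (simp add: ad_on_def)
  with \<open>a \<in> V\<close> \<open>b \<in> V\<close> have "a - b \<in> lie_center V br"
    by (simp add: lie_center_def diff_mem bracket_diff_left)
  with assms show "a = b"
    by simp
qed

lemma lie_iso_ad_on:
  "lie_center V br = {0} \<Longrightarrow> lie_iso sc V br (fun_scale sc) (ad_on V br ` V) (commutator_on V)"
  unfolding lie_iso_iff_hom using inj_on_imp_bij_betw[OF inj_on_ad_on] lie_hom_ad_on by blast

end

section \<open>Direct sums of ideals\<close>

locale lie_direct_sum = lie_alg sc L br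
  for sc :: "'k::field \<Rightarrow> 'v::ab_group_add \<Rightarrow> 'v" and L br +
  fixes L1 L2 :: "'v set"
  assumes ideal1: "lie_ideal sc L br L1" and ideal2: "lie_ideal sc L br L2"
    and summands_disjoint: "L1 \<inter> L2 = {0}"
    and summands_sum: "{a + b | a b. a \<in> L1 \<and> b \<in> L2} = L"
begin

sublocale summand1: lie_alg sc L1 br
  using lie_algebra_ideal[OF ideal1] by (rule lie_alg.intro)

sublocale summand2: lie_alg sc L2 br
  using lie_algebra_ideal[OF ideal2] by (rule lie_alg.intro)

lemma summand1_subset: "L1 \<subseteq> L"
  and summand2_subset: "L2 \<subseteq> L"
  using ideal1 ideal2 by (simp_all add: lie_ideal_def)

lemma summand1_bracket_left: "x \<in> L \<Longrightarrow> y \<in> L1 \<Longrightarrow> br x y \<in> L1"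
  and summand2_bracket_left: "x \<in> L \<Longrightarrow> y \<in> L2 \<Longrightarrow> br x y \<in> L2"
  using ideal1 ideal2 by (simp_all add: lie_ideal_def)

lemma summand1_bracket_right: "x \<in> L1 \<Longrightarrow> y \<in> L \<Longrightarrow> br x y \<in> L1"
  using bracket_antisym[of x y] summand1.neg_mem[OF summand1_bracket_left] summand1_subset
  by (simp add: subset_iff)

lemma summand2_bracket_right: "x \<in> L2 \<Longrightarrow> y \<in> L \<Longrightarrow> br x y \<in> L2"
  using bracket_antisym[of x y] summand2.neg_mem[OF summand2_bracket_left] summand2_subset
  by (simp add: subset_iff)

lemma bracket_summands: "x \<in> L1 \<Longrightarrow> y \<in> L2 \<Longrightarrow> br x y = 0"
  using summand1_bracket_right[of x y] summand2_bracket_left[of x y] summand1_subset summand2_subset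
    summands_disjoint by (auto simp: subset_iff)

lemma bracket_summands': "x \<in> L1 \<Longrightarrow> y \<in> L2 \<Longrightarrow> br y x = 0"
  using summand1_bracket_left[of y x] summand2_bracket_right[of y x] summand1_subset summand2_subset
    summands_disjoint by (auto simp: subset_iff)

lemma summands_add_eq:
  assumes "a \<in> L1" "b \<in> L2" "a' \<in> L1" "b' \<in> L2" "a + b = a' + b'"
  shows "a = a'" "b = b'"
proof -
  have "a - a' = b' - b"
    using assms(5) by (simp add: algebra_simps)
  moreover have "a - a' \<in> L1" "b' - b \<in> L2"
    using assms by (simp_all add: summand1.diff_mem summand2.diff_mem)
  ultimately have "a - a' \<in> L1 \<inter> L2"
    by simp
  then show "a = a'"
    using summands_disjoint by auto
  with assms(5) show "b = b'"
    by simp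
qed

definition proj1 :: "'v \<Rightarrow> 'v" where
  "proj1 l = (THE a. a \<in> L1 \<and> l - a \<in> L2)"

lemma proj1_add_eq: "a \<in> L1 \<Longrightarrow> b \<in> L2 \<Longrightarrow> proj1 (a + b) = a"
  unfolding proj1_def
  by (rule the_equality) (auto dest: summands_add_eq(1)[of _ b _ "a + b - _"])

lemma proj1_summand1: "a \<in> L1 \<Longrightarrow> proj1 a = a"
  using proj1_add_eq[of a 0] summand2.zero_mem by simp

lemma proj1_summand2: "b \<in> L2 \<Longrightarrow> proj1 b = 0"
  using proj1_add_eq[of 0 b] summand1.zero_mem by simp

lemma proj1_mem: "l \<in> L \<Longrightarrow> proj1 l \<in> L1"
  and diff_proj1_mem: "l \<in> L \<Longrightarrow> l - proj1 l \<in> L2"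
  using summands_sum proj1_add_eq by force+

lemma linear_on_proj1: "linear_on sc sc L proj1"
  unfolding linear_on_def
proof (intro conjI ballI allI)
  fix l l' assume "l \<in> L" "l' \<in> L"
  have "l + l' = (proj1 l + proj1 l') + ((l - proj1 l) + (l' - proj1 l'))"
    by (simp add: algebra_simps)
  then show "proj1 (l + l') = proj1 l + proj1 l'"
    using proj1_add_eq proj1_mem diff_proj1_mem \<open>l \<in> L\<close> \<open>l' \<in> L\<close>
      summand1.add_mem summand2.add_mem by metis
next
  fix c l assume "l \<in> L"
  have "sc c l = sc c (proj1 l) + sc c (l - proj1 l)"
    by (simp add: scale_right_diff_distrib)
  then show "proj1 (sc c l) = sc c (proj1 l)"
    using proj1_add_eq proj1_mem diff_proj1_mem \<open>l \<in> L\<close>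
      summand1.scale_mem summand2.scale_mem by metis
qed

lemma proj1_diff: "l \<in> L \<Longrightarrow> l' \<in> L \<Longrightarrow> proj1 (l - l') = proj1 l - proj1 l'"
  using linear_on_diff[OF linear_on_proj1] diff_mem by blast

lemma proj1_image: "proj1 ` L = L1"
  using proj1_mem proj1_summand1 summand1_subset by (auto intro!: image_eqI)

lemma lie_iso_prod_summands: "lie_iso (prod_scale sc sc) (L1 \<times> L2) (prod_bracket br br) sc L br"
  unfolding lie_iso_iff_hom
proof (intro exI conjI)
  show "bij_betw (\<lambda>(a, b). a + b) (L1 \<times> L2) L"
    unfolding bij_betw_def inj_on_def using summands_sum summands_add_eq by auto
  have "br (a + b) (a' + b') = br a a' + br b b'" if "a \<in> L1" "b \<in> L2" "a' \<in> L1" "b' \<in> L2" for a b a' b'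
    using that summand1_subset summand2_subset bracket_summands bracket_summands'
    by (simp add: subset_iff bracket_add_left bracket_add_right add_mem)
  then show "lie_hom_on (prod_scale sc sc) (L1 \<times> L2) (prod_bracket br br) sc br (\<lambda>(a, b). a + b)"
    unfolding lie_hom_on_def linear_on_def by (auto simp: algebra_simps scale_right_distrib)
qed

lemma derived_prod_iso:
  assumes "lie_algebra s1 H1 b1" "lie_iso s1 (derived s1 H1 b1) b1 sc L1 br"
    and "lie_algebra s2 H2 b2" "lie_iso s2 (derived s2 H2 b2) b2 sc L2 br"
  shows "lie_iso (prod_scale s1 s2) (derived (prod_scale s1 s2) (H1 \<times> H2) (prod_bracket b1 b2))
           (prod_bracket b1 b2) sc L br"
  using derived_prod[OF assms(1,3)] lie_iso_trans[OF lie_iso_prod[OF assms(2,4)] lie_iso_prod_summands]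
  by simp

lemma derivation_summand2_mem:
  assumes Z: "lie_center L1 br = {0}" and D: "lie_derivation sc L br D" and z: "z \<in> L2"
  shows "D z \<in> L2"
proof -
  have "z \<in> L" "D z \<in> L" "D 0 = 0"
    using z summand2_subset D linear_on_zero[OF _ zero_mem] by (auto simp: lie_derivation_def)
  define a where "a = proj1 (D z)"
  have "a \<in> L1" "a \<in> L"
    using proj1_mem[OF \<open>D z \<in> L\<close>] summand1_subset by (auto simp: a_def)
  have "br a x = 0" if x: "x \<in> L1" for x
  proof -
    have "x \<in> L" "D x \<in> L"
      using x summand1_subset D by (auto simp: lie_derivation_def)
    have "br (D x) z + br x (D z) = D (br x z)"
      using D \<open>x \<in> L\<close> \<open>z \<in> L\<close> by (simp add: lie_derivation_def)
    then have "br x (D z) = - br (D x) z"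
      using bracket_summands[OF x z] \<open>D 0 = 0\<close> by (simp add: eq_neg_iff_add_eq_0 add.commute)
    also have "\<dots> = br z (D x)"
      using bracket_antisym[OF \<open>D x \<in> L\<close> \<open>z \<in> L\<close>] by simp
    finally have "br x (D z) \<in> L2"
      using summand2_bracket_right[OF z \<open>D x \<in> L\<close>] by simp
    with summand1_bracket_right[OF x \<open>D z \<in> L\<close>] have "br x (D z) = 0"
      using summands_disjoint by blast
    moreover have "br x (D z - a) = 0"
      using bracket_summands[OF x diff_proj1_mem[OF \<open>D z \<in> L\<close>]] by (simp add: a_def)
    ultimately have "br x a = 0"
      using bracket_diff_right[OF \<open>x \<in> L\<close> \<open>D z \<in> L\<close> \<open>a \<in> L\<close>] by simp
    then show ?thesis
      using summand1.bracket_antisym[OF \<open>a \<in> L1\<close> x] by simp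
  qed
  with \<open>a \<in> L1\<close> have "a \<in> lie_center L1 br"
    by (simp add: lie_center_def)
  then show ?thesis
    using Z diff_proj1_mem[OF \<open>D z \<in> L\<close>] by (simp add: a_def)
qed

lemma proj1_derivation:
  assumes Z: "lie_center L1 br = {0}" and D: "lie_derivation sc L br D" and "l \<in> L"
  shows "proj1 (D l) = proj1 (D (proj1 l))"
proof -
  have l2: "l - proj1 l \<in> L2" and "proj1 l \<in> L" "l - proj1 l \<in> L"
    using \<open>l \<in> L\<close> diff_proj1_mem proj1_mem summand1_subset summand2_subset by auto
  have "D (proj1 l + (l - proj1 l)) = D (proj1 l) + D (l - proj1 l)"
    using D \<open>proj1 l \<in> L\<close> \<open>l - proj1 l \<in> L\<close> unfolding lie_derivation_def linear_on_def by blast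
  then have "proj1 (D l) = proj1 (D (proj1 l)) + proj1 (D (l - proj1 l))"
    using linear_on_proj1 D \<open>proj1 l \<in> L\<close> \<open>l - proj1 l \<in> L\<close>
    by (simp add: lie_derivation_def linear_on_def)
  then show ?thesis
    using proj1_summand2[OF derivation_summand2_mem[OF Z D l2]] by simp
qed

definition induced_derivation :: "('v \<Rightarrow> 'v) \<Rightarrow> 'v \<Rightarrow> 'v" where
  "induced_derivation D = (\<lambda>x. if x \<in> L1 then proj1 (D x) else 0)"

lemma induced_derivation_commutator:
  assumes "lie_center L1 br = {0}" and D: "lie_derivation sc L br D" and E: "lie_derivation sc L br E"
  shows "induced_derivation (\<lambda>l. D (E l) - E (D l))
           = commutator_on L1 (induced_derivation D) (induced_derivation E)"
proof
  fix x
  show "induced_derivation (\<lambda>l. D (E l) - E (D l)) x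
          = commutator_on L1 (induced_derivation D) (induced_derivation E) x"
  proof (cases "x \<in> L1")
    case True
    then have "x \<in> L" "D x \<in> L" "E x \<in> L" "D (E x) \<in> L" "E (D x) \<in> L"
      using summand1_subset D E by (auto simp: lie_derivation_def)
    then have "proj1 (D (E x) - E (D x)) = proj1 (D (proj1 (E x))) - proj1 (E (proj1 (D x)))"
      using proj1_diff proj1_derivation[OF assms(1) D] proj1_derivation[OF assms(1) E] by simp
    then show ?thesis
      using True proj1_mem \<open>D x \<in> L\<close> \<open>E x \<in> L\<close>
      by (simp add: induced_derivation_def commutator_on_def)
  qed (simp add: induced_derivation_def commutator_on_def)
qed

lemma induced_derivation_ad:
  assumes "l \<in> L"
  shows "induced_derivation (br l) = ad_on L1 br (proj1 l)"
proof
  fix x show "induced_derivation (br l) x = ad_on L1 br (proj1 l) x"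
  proof (cases "x \<in> L1")
    case True
    then have "x \<in> L"
      using summand1_subset by auto
    have "br l x = br (proj1 l) x + br (l - proj1 l) x"
      using bracket_add_left[OF _ _ \<open>x \<in> L\<close>, of "proj1 l" "l - proj1 l"] assms diff_mem
        proj1_mem summand1_subset by (auto simp: subset_iff)
    also have "\<dots> = br (proj1 l) x"
      using bracket_summands'[OF True diff_proj1_mem[OF assms]] by simp
    finally show ?thesis
      using True proj1_summand1 summand1.bracket_mem proj1_mem[OF assms]
      by (simp add: induced_derivation_def ad_on_def)
  qed (simp add: induced_derivation_def ad_on_def)
qed

end

section \<open>The action of \<open>H\<close> on \<open>L \<cong> H\<^sup>2\<close>\<close>

locale derived_action =
  H: lie_alg scH H brH + L: lie_alg sc L br
  for scH :: "'k::field \<Rightarrow> 'h::ab_group_add \<Rightarrow> 'h" and H brH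
    and sc :: "'k \<Rightarrow> 'v::ab_group_add \<Rightarrow> 'v" and L br +
  fixes f :: "'h \<Rightarrow> 'v"
  assumes bij: "bij_betw f (derived scH H brH) L"
    and hom: "lie_hom_on scH (derived scH H brH) brH sc br f"
begin

abbreviation H2 :: "'h set" where
  "H2 \<equiv> derived scH H brH"

sublocale H2: lie_alg scH H2 brH
  using H.lie_algebra_derived by (rule lie_alg.intro)

definition action :: "'h \<Rightarrow> 'v \<Rightarrow> 'v" where
  "action h l = f (brH h (inv_into H2 f l))"

lemma inv_into_mem: "l \<in> L \<Longrightarrow> inv_into H2 f l \<in> H2"
  using bij by (meson bij_betwE bij_betw_inv_into)

lemma f_inv_into: "l \<in> L \<Longrightarrow> f (inv_into H2 f l) = l"
  using bij by (simp add: bij_betw_inv_into_right)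

lemma inv_into_f: "d \<in> H2 \<Longrightarrow> inv_into H2 f (f d) = d"
  using bij by (simp add: bij_betw_inv_into_left)

lemma f_mem: "d \<in> H2 \<Longrightarrow> f d \<in> L"
  using bij by (meson bij_betwE)

lemma bracket_mem_H2: "h \<in> H \<Longrightarrow> d \<in> H2 \<Longrightarrow> brH h d \<in> H2"
  using H.bracket_in_derived H.derived_subset by blast

lemma linear_on_f: "linear_on scH sc H2 f"
  and f_bracket: "d \<in> H2 \<Longrightarrow> e \<in> H2 \<Longrightarrow> f (brH d e) = br (f d) (f e)"
  using hom by (simp_all add: lie_hom_on_def)

lemma linear_on_inv_into: "linear_on sc scH L (inv_into H2 f)"
  using lie_hom_on_inv_into[OF H2.lie_algebra bij hom] by (simp add: lie_hom_on_def)

lemma action_mem: "h \<in> H \<Longrightarrow> l \<in> L \<Longrightarrow> action h l \<in> L"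
  by (simp add: action_def f_mem bracket_mem_H2 inv_into_mem)

lemma action_derived: "d \<in> H2 \<Longrightarrow> l \<in> L \<Longrightarrow> action d l = br (f d) l"
  by (simp add: action_def f_bracket inv_into_mem f_inv_into)

lemma action_add:
  assumes "a \<in> H" "b \<in> H" "l \<in> L"
  shows "action (a + b) l = action a l + action b l"
proof -
  have "inv_into H2 f l \<in> H2" "inv_into H2 f l \<in> H"
    using inv_into_mem[OF \<open>l \<in> L\<close>] H.derived_subset by auto
  then show ?thesis
    using linear_on_f bracket_mem_H2 H.bracket_add_left assms by (simp add: action_def linear_on_def)
qed

lemma action_scale:
  assumes "a \<in> H" "l \<in> L"
  shows "action (scH c a) l = sc c (action a l)"
proof -
  have "inv_into H2 f l \<in> H2" "inv_into H2 f l \<in> H"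
    using inv_into_mem[OF \<open>l \<in> L\<close>] H.derived_subset by auto
  then show ?thesis
    using linear_on_f bracket_mem_H2 H.bracket_scale_left assms by (simp add: action_def linear_on_def)
qed

lemma action_bracket:
  assumes "a \<in> H" "b \<in> H" "l \<in> L"
  shows "action (brH a b) l = action a (action b l) - action b (action a l)"
proof -
  define d where "d = inv_into H2 f l"
  have "d \<in> H2" "d \<in> H"
    using inv_into_mem[OF \<open>l \<in> L\<close>] H.derived_subset by (auto simp: d_def)
  have "brH (brH a b) d = brH a (brH b d) - brH b (brH a d)"
    using H.bracket_leibniz[OF \<open>a \<in> H\<close> \<open>b \<in> H\<close> \<open>d \<in> H\<close>] by (simp add: algebra_simps)
  then have "action (brH a b) l = f (brH a (brH b d)) - f (brH b (brH a d))"
    unfolding action_def d_def[symmetric]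
    using linear_on_diff[OF linear_on_f] bracket_mem_H2 assms \<open>d \<in> H2\<close> H2.diff_mem by simp
  then show ?thesis
    using assms \<open>d \<in> H2\<close> bracket_mem_H2 by (simp add: action_def d_def inv_into_f)
qed

lemma lie_derivation_action:
  assumes "h \<in> H"
  shows "lie_derivation sc L br (action h)"
  unfolding lie_derivation_def
proof (intro conjI ballI)
  show "linear_on sc sc L (action h)"
    using linear_on_f linear_on_inv_into inv_into_mem bracket_mem_H2[OF assms] H.derived_subset
      H.bracket_add_right H.bracket_scale_right assms
    by (auto simp: action_def linear_on_def subset_iff)
next
  fix x y assume "x \<in> L" "y \<in> L"
  define u v where "u = inv_into H2 f x" and "v = inv_into H2 f y"
  have "u \<in> H2" "v \<in> H2" "u \<in> H" "v \<in> H"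
    using inv_into_mem \<open>x \<in> L\<close> \<open>y \<in> L\<close> H.derived_subset by (auto simp: u_def v_def)
  have "inv_into H2 f (br x y) = brH u v"
    using lie_hom_on_inv_into[OF H2.lie_algebra bij hom] \<open>x \<in> L\<close> \<open>y \<in> L\<close>
    by (simp add: lie_hom_on_def u_def v_def)
  then have "action h (br x y) = f (brH (brH h u) v + brH u (brH h v))"
    using H.bracket_leibniz[OF assms \<open>u \<in> H\<close> \<open>v \<in> H\<close>] by (simp add: action_def)
  also have "\<dots> = br (action h x) y + br x (action h y)"
    using linear_on_f f_bracket bracket_mem_H2 assms \<open>u \<in> H2\<close> \<open>v \<in> H2\<close> H2.bracket_mem
      f_inv_into \<open>x \<in> L\<close> \<open>y \<in> L\<close>
    by (simp add: linear_on_def action_def u_def v_def)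
  finally show "action h (br x y) = br (action h x) y + br x (action h y)" .
qed (rule action_mem[OF assms])

end

locale summand_action = lie_direct_sum sc L br L1 L2 + derived_action scH H brH sc L br f
  for sc :: "'k::field \<Rightarrow> 'v::ab_group_add \<Rightarrow> 'v" and L br L1 L2
    and scH :: "'k \<Rightarrow> 'h::ab_group_add \<Rightarrow> 'h" and H brH f +
  assumes centerless: "lie_center L1 br = {0}"
begin

definition induced_action :: "'h \<Rightarrow> 'v \<Rightarrow> 'v" where
  "induced_action h = induced_derivation (action h)"

lemma lie_hom_induced_action:
  "lie_hom_on scH H brH (fun_scale sc) (commutator_on L1) induced_action"
  unfolding lie_hom_on_def linear_on_def
proof (intro conjI ballI allI)
  fix a b assume "a \<in> H" "b \<in> H"
  then show "induced_action (a + b) = induced_action a + induced_action b"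
    using linear_on_proj1 action_add action_mem summand1_subset
    by (auto simp: induced_action_def induced_derivation_def fun_eq_iff linear_on_def)
  have "induced_action (brH a b)
          = induced_derivation (\<lambda>l. action a (action b l) - action b (action a l))"
    using action_bracket \<open>a \<in> H\<close> \<open>b \<in> H\<close> summand1_subset
    by (auto simp: induced_action_def induced_derivation_def fun_eq_iff)
  then show "induced_action (brH a b) = commutator_on L1 (induced_action a) (induced_action b)"
    using induced_derivation_commutator[OF centerless] lie_derivation_action \<open>a \<in> H\<close> \<open>b \<in> H\<close>
    by (simp add: induced_action_def)
next
  fix c a assume "a \<in> H"
  then show "induced_action (scH c a) = fun_scale sc c (induced_action a)"
    using linear_on_proj1 action_scale action_mem summand1_subset
    by (auto simp: induced_action_def induced_derivation_def fun_eq_iff linear_on_def fun_scale_def)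
qed

lemma induced_action_derived: "induced_action ` H2 = ad_on L1 br ` L1"
proof -
  have "induced_action d = ad_on L1 br (proj1 (f d))" if "d \<in> H2" for d
  proof -
    have "induced_action d = induced_derivation (br (f d))"
      using action_derived[OF that] summand1_subset
      by (auto simp: induced_action_def induced_derivation_def fun_eq_iff)
    then show ?thesis
      using induced_derivation_ad f_mem[OF that] by simp
  qed
  then have "induced_action ` H2 = ad_on L1 br ` proj1 ` f ` H2"
    by (simp add: image_image)
  then show ?thesis
    using bij proj1_image by (simp add: bij_betw_def)
qed

end

lemma (in lie_direct_sum) centerless_summand_derived_iso:
  fixes scH :: "'k \<Rightarrow> 'h::ab_group_add \<Rightarrow> 'h"
  assumes Z: "lie_center L1 br = {0}"
    and H: "fd_lie_algebra scH H brH" and iso: "lie_iso scH (derived scH H brH) brH sc L br"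
  shows "\<exists>(K :: ('v \<Rightarrow> 'v) set) brK. fd_lie_algebra (fun_scale sc) K brK \<and>
           lie_iso (fun_scale sc) (derived (fun_scale sc) K brK) brK sc L1 br"
proof -
  obtain f where "bij_betw f (derived scH H brH) L" "lie_hom_on scH (derived scH H brH) brH sc br f"
    using iso lie_iso_iff_hom by blast
  with fd_lie_algebra_lie_alg[OF H] Z interpret summand_action sc L br L1 L2 scH H brH f
    by (intro summand_action.intro summand_action_axioms.intro derived_action.intro
        derived_action_axioms.intro lie_alg_axioms lie_direct_sum_axioms)
  have "vector_space (fun_scale sc)"
    by (rule vector_space_fun_scale) (rule vector_space_axioms)
  then have "derived (fun_scale sc) (induced_action ` H) (commutator_on L1) = ad_on L1 br ` L1"
    using derived_image[OF H.lie_algebra _ lie_hom_induced_action] induced_action_derived by simp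
  moreover have "lie_iso (fun_scale sc) (ad_on L1 br ` L1) (commutator_on L1) sc L1 br"
    using lie_iso_sym[OF summand1.lie_algebra summand1.lie_iso_ad_on[OF Z]] .
  ultimately show ?thesis
    using fd_lie_algebra_image[OF H \<open>vector_space (fun_scale sc)\<close> lie_hom_induced_action]
    by (intro exI[of _ "induced_action ` H"] exI[of _ "commutator_on L1"]) simp
qed

theorem lemma2p7:
  fixes sc :: "'k::field \<Rightarrow> 'v::ab_group_add \<Rightarrow> 'v"
    and L L1 L2 :: "'v set" and br :: "'v \<Rightarrow> 'v \<Rightarrow> 'v"
  assumes L: "fd_lie_algebra sc L br"
    and I1: "lie_ideal sc L br L1" and I2: "lie_ideal sc L br L2"
    and disj: "L1 \<inter> L2 = {0}"
    and sum: "{a + b | a b. a \<in> L1 \<and> b \<in> L2} = L"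
  shows
    "(\<forall>(sc1 :: 'k \<Rightarrow> 'a::ab_group_add \<Rightarrow> 'a) H1 br1 (sc2 :: 'k \<Rightarrow> 'b::ab_group_add \<Rightarrow> 'b) H2 br2.
        fd_lie_algebra sc1 H1 br1 \<and> lie_iso sc1 (derived sc1 H1 br1) br1 sc L1 br \<and>
        fd_lie_algebra sc2 H2 br2 \<and> lie_iso sc2 (derived sc2 H2 br2) br2 sc L2 br \<longrightarrow>
        (\<exists>(H :: (nat \<Rightarrow> 'k) set) brH.
            fd_lie_algebra seq_scale H brH \<and> lie_iso seq_scale (derived seq_scale H brH) brH sc L br))
     \<and>
     (\<forall>(scH :: 'k \<Rightarrow> 'h::ab_group_add \<Rightarrow> 'h) H brH.
        fd_lie_algebra scH H brH \<and> lie_iso scH (derived scH H brH) brH sc L br \<and>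
        lie_center L1 br = {0} \<longrightarrow>
        (\<exists>(K :: (nat \<Rightarrow> 'k) set) brK.
            fd_lie_algebra seq_scale K brK \<and> lie_iso seq_scale (derived seq_scale K brK) brK sc L1 br))"
proof -
  interpret lie_direct_sum sc L br L1 L2
    using L I1 I2 disj sum by unfold_locales (simp_all add: fd_lie_algebra_def)
  show ?thesis
  proof (intro conjI allI impI; elim conjE)
    fix sc1 :: "'k \<Rightarrow> 'a \<Rightarrow> 'a" and H1 br1 and sc2 :: "'k \<Rightarrow> 'b \<Rightarrow> 'b" and H2 br2
    assume H1: "fd_lie_algebra sc1 H1 br1" "lie_iso sc1 (derived sc1 H1 br1) br1 sc L1 br"
      and H2: "fd_lie_algebra sc2 H2 br2" "lie_iso sc2 (derived sc2 H2 br2) br2 sc L2 br"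
    have "lie_algebra sc1 H1 br1" "lie_algebra sc2 H2 br2"
      using H1(1) H2(1) fd_lie_algebra_lie_alg lie_alg.lie_algebra by blast+
    from fd_lie_algebra_prod[OF H1(1) H2(1)] derived_prod_iso[OF this(1) H1(2) this(2) H2(2)]
    show "\<exists>(H :: (nat \<Rightarrow> 'k) set) brH.
        fd_lie_algebra seq_scale H brH \<and> lie_iso seq_scale (derived seq_scale H brH) brH sc L br"
      by (rule ex_seq_lie_algebra_derived_iso)
  next
    fix scH :: "'k \<Rightarrow> 'h \<Rightarrow> 'h" and H brH
    assume "fd_lie_algebra scH H brH" "lie_iso scH (derived scH H brH) brH sc L br"
      and "lie_center L1 br = {0}"
    then obtain K :: "('v \<Rightarrow> 'v) set" and brK where "fd_lie_algebra (fun_scale sc) K brK"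
      "lie_iso (fun_scale sc) (derived (fun_scale sc) K brK) brK sc L1 br"
      using centerless_summand_derived_iso by blast
    then show "\<exists>(K :: (nat \<Rightarrow> 'k) set) brK.
        fd_lie_algebra seq_scale K brK \<and> lie_iso seq_scale (derived seq_scale K brK) brK sc L1 br"
      by (rule ex_seq_lie_algebra_derived_iso)
  qed
qed

end
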